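(* Let $F$ be the graph with vertex set $\{a,b,c,d,e,g,h,i,x,x'\}$ and edge set $\{de,\ da,\ ae,\ dc,\ ec,\ ac,\ eg,\ cg,\ db,\ ab,\ cb,\ gb,\ ex',\ bx',\ di,\ ix,\ ah,\ hx\}$. Then $F$ has an acyclic $(\mathcal{S}_3,\mathcal{S}_3)$-colouring, and in every acyclic $(\mathcal{S}_3,\mathcal{S}_3)$-colouring $f$ of $F$ we have $f(x)=f(x')$, the vertex $x$ has exactly two neighbours coloured $f(x)$, and the vertex $x'$ has exactly one neighbour coloured $f(x')$.
   Context: An acyclic $(\mathcal{S}_3,\mathcal{S}_3)$-colouring of a graph $G$ is a map $c:V(G)\to\{1,2\}$ (not necessarily proper) such that each of the two colour classes induces a subgraph of maximum degree at most $3$, and there is no cycle in $G$ every edge of which joins a vertex of colour $1$ to a vertex of colour $2$. *)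

theory Defs
  imports Main
begin

text \<open>A simple graph is given by a finite vertex set V and a symmetric,
irreflexive adjacency relation adj on V. A 2-colouring is a map into {1,2}.\<close>

definition colour_map :: "'a set \<Rightarrow> ('a \<Rightarrow> nat) \<Rightarrow> bool" where
  "colour_map V c \<longleftrightarrow> (\<forall>v\<in>V. c v \<in> {1, 2})"

definition same_colour_deg :: "'a set \<Rightarrow> ('a \<Rightarrow> 'a \<Rightarrow> bool) \<Rightarrow> ('a \<Rightarrow> nat) \<Rightarrow> 'a \<Rightarrow> nat" where
  "same_colour_deg V adj c v = card {w \<in> V. adj v w \<and> c w = c v}"

definition is_cycle :: "'a set \<Rightarrow> ('a \<Rightarrow> 'a \<Rightarrow> bool) \<Rightarrow> 'a list \<Rightarrow> bool" where
  "is_cycle V adj vs \<longleftrightarrow> length vs \<ge> 3 \<and> distinct vs \<and> set vs \<subseteq> V \<and>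
     (\<forall>i < length vs. adj (vs ! i) (vs ! ((i + 1) mod length vs)))"

definition bichromatic_cycle :: "'a set \<Rightarrow> ('a \<Rightarrow> 'a \<Rightarrow> bool) \<Rightarrow> ('a \<Rightarrow> nat) \<Rightarrow> 'a list \<Rightarrow> bool" where
  "bichromatic_cycle V adj c vs \<longleftrightarrow> is_cycle V adj vs \<and>
     (\<forall>i < length vs. c (vs ! i) \<noteq> c (vs ! ((i + 1) mod length vs)))"

definition acyclic_S3S3_colouring :: "'a set \<Rightarrow> ('a \<Rightarrow> 'a \<Rightarrow> bool) \<Rightarrow> ('a \<Rightarrow> nat) \<Rightarrow> bool" where
  "acyclic_S3S3_colouring V adj c \<longleftrightarrow> colour_map V c \<and>
     (\<forall>v\<in>V. same_colour_deg V adj c v \<le> 3) \<and>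
     \<not> (\<exists>vs. bichromatic_cycle V adj c vs)"

datatype vtx = Va | Vb | Vc | Vd | Ve | Vg | Vh | Vi | Vx | Vx'

definition F_edges :: "(vtx \<times> vtx) set" where
  "F_edges = {(Vd,Ve), (Vd,Va), (Va,Ve), (Vd,Vc), (Ve,Vc), (Va,Vc), (Ve,Vg), (Vc,Vg),
              (Vd,Vb), (Va,Vb), (Vc,Vb), (Vg,Vb), (Ve,Vx'), (Vb,Vx'), (Vd,Vi), (Vi,Vx),
              (Va,Vh), (Vh,Vx)}"

definition F_adj :: "vtx \<Rightarrow> vtx \<Rightarrow> bool" where
  "F_adj u v \<longleftrightarrow> (u, v) \<in> F_edges \<or> (v, u) \<in> F_edges"

definition F_V :: "vtx set" where
  "F_V = {Va, Vb, Vc, Vd, Ve, Vg, Vh, Vi, Vx, Vx'}"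

end

theory Submission
  imports Defs
begin

text \<open>
  A 2--2 split of a \<open>K\<^sub>4\<close> contains an alternating 4-cycle, so in each of the cliques
  \<open>{a,c,d,e}\<close> and \<open>{a,b,c,d}\<close> at most one vertex differs in colour from the others; together
  with a few more 4-cycles and the degree bound this forces \<open>a, c, d\<close> to share a colour \<open>\<alpha>\<close>.
  Exactly one of \<open>b, e\<close> is coloured \<open>\<alpha>\<close>: both would give \<open>a\<close> four neighbours of its colour,
  neither would make \<open>b d e c\<close> alternate. Either way the degree bound at \<open>a\<close>, \<open>d\<close> and at
  whichever of \<open>b, e\<close> is coloured \<open>\<alpha>\<close> gives \<open>h, i, x'\<close> the other colour \<open>\<beta>\<close>, and one of the
  6-cycles \<open>d e a h x i\<close>, \<open>a b d i x h\<close> forces \<open>x\<close> to be \<open>\<beta>\<close> too.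

  For existence colour \<open>{a,b,c,d}\<close> with 1 and the rest with 2: the bichromatic edges form a
  forest, since the vertices can be deleted one at a time, each with at most one bichromatic
  neighbour left.
\<close>

lemma successively_iff_nth:
  "successively P xs \<longleftrightarrow> (\<forall>i. Suc i < length xs \<longrightarrow> P (xs ! i) (xs ! Suc i))"
proof (induction xs rule: induct_list012)
  case (3 x y xs)
  have "(\<forall>i. Suc i < length (x # y # xs) \<longrightarrow> P ((x # y # xs) ! i) ((x # y # xs) ! Suc i)) \<longleftrightarrow>
        P x y \<and> (\<forall>i. Suc i < length (y # xs) \<longrightarrow> P ((y # xs) ! i) ((y # xs) ! Suc i))"
    by (auto simp: nth_Cons split: nat.split)
  with 3 show ?case by simp
qed auto

lemma cyclically_iff_successively:
  assumes "vs \<noteq> []"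
  shows "(\<forall>i < length vs. R (vs ! i) (vs ! ((i + 1) mod length vs))) \<longleftrightarrow>
    successively R (vs @ [hd vs])"
proof -
  have "(vs @ [hd vs]) ! Suc i = vs ! ((i + 1) mod length vs)" if "i < length vs" for i
    using that assms by (cases "Suc i = length vs") (auto simp: nth_append hd_conv_nth)
  then show ?thesis
    by (auto simp: successively_iff_nth nth_append)
qed

lemma is_cycle_iff_successively:
  "is_cycle V adj vs \<longleftrightarrow>
     3 \<le> length vs \<and> distinct vs \<and> set vs \<subseteq> V \<and> successively adj (vs @ [hd vs])"
proof (cases "vs = []")
  case False
  show ?thesis unfolding is_cycle_def cyclically_iff_successively[OF False] ..
qed (simp add: is_cycle_def)

lemma bichromatic_cycle_iff_successively:
  "bichromatic_cycle V adj c vs \<longleftrightarrow>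
     is_cycle V adj vs \<and> successively (\<lambda>u w. c u \<noteq> c w) (vs @ [hd vs])"
proof (cases "vs = []")
  case False
  show ?thesis
    unfolding bichromatic_cycle_def cyclically_iff_successively[OF False, of "\<lambda>u w. c u \<noteq> c w"] ..
qed (simp add: bichromatic_cycle_def is_cycle_def)

lemma cyclic_neighbours:
  assumes R: "\<forall>i < length vs. R (vs ! i) (vs ! ((i + 1) mod length vs))"
    and "distinct vs" "3 \<le> length vs" "v \<in> set vs"
  obtains u w where "u \<in> set vs" "w \<in> set vs" "u \<noteq> w" "R v u" "R w v"
proof -
  define n where "n = length vs"
  obtain i where i: "i < n" "vs ! i = v" using \<open>v \<in> set vs\<close> by (auto simp: n_def in_set_conv_nth)
  define j where "j = (if i = 0 then n - 1 else i - 1)"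
  have n3: "3 \<le> n" using assms(3) by (simp add: n_def)
  have j: "j < n" "(j + 1) mod n = i"
    using i n3 by (auto simp: j_def)
  have k: "(i + 1) mod n < n" using n3 by simp
  have "(i + 1) mod n \<noteq> j"
    using i n3 by (cases "i + 1 = n") (auto simp: j_def)
  then have "vs ! ((i + 1) mod n) \<noteq> vs ! j"
    using j k \<open>distinct vs\<close> by (simp add: n_def nth_eq_iff_index_eq)
  moreover have "R v (vs ! ((i + 1) mod n))" "R (vs ! j) v"
    using R i j by (metis n_def)+
  ultimately show ?thesis using that j(1) k by (metis n_def nth_mem)
qed

lemma bichromatic_cycle_neighbours:
  assumes "bichromatic_cycle V adj c vs" "v \<in> set vs" and sym: "\<And>x y. adj x y \<Longrightarrow> adj y x"
  obtains u w where "u \<in> set vs" "w \<in> set vs" "u \<noteq> w"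
    "adj v u" "adj v w" "c u \<noteq> c v" "c w \<noteq> c v"
proof -
  have "\<forall>i < length vs. (\<lambda>x y. adj x y \<and> c x \<noteq> c y) (vs ! i) (vs ! ((i + 1) mod length vs))"
    using assms(1) by (simp add: bichromatic_cycle_def is_cycle_def)
  moreover have "distinct vs" "3 \<le> length vs"
    using assms(1) by (simp_all add: bichromatic_cycle_def is_cycle_def)
  ultimately obtain u w where "u \<in> set vs" "w \<in> set vs" "u \<noteq> w"
    "adj v u \<and> c v \<noteq> c u" "adj w v \<and> c w \<noteq> c v"
    using \<open>v \<in> set vs\<close> by (rule cyclic_neighbours)
  then show ?thesis using that sym by metis
qed

lemma no_bichromatic_cycle_by_peeling:
  fixes rank :: "'a \<Rightarrow> nat"
  assumes "finite V" and sym: "\<And>x y. adj x y \<Longrightarrow> adj y x"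
    and peel: "\<forall>v\<in>V. card {u \<in> V. adj v u \<and> c u \<noteq> c v \<and> rank v \<le> rank u} \<le> 1"
  shows "\<not> bichromatic_cycle V adj c vs"
proof
  assume bc: "bichromatic_cycle V adj c vs"
  then have "vs \<noteq> []" and "set vs \<subseteq> V" by (auto simp: bichromatic_cycle_def is_cycle_def)
  obtain v where v: "v \<in> set vs" "\<forall>u. u \<in> set vs \<longrightarrow> rank v \<le> rank u"
    using ex_has_least_nat[of "\<lambda>v. v \<in> set vs", OF hd_in_set[OF \<open>vs \<noteq> []\<close>]] by blast
  obtain u w where "u \<in> set vs" "w \<in> set vs" "u \<noteq> w"
    "adj v u" "adj v w" "c u \<noteq> c v" "c w \<noteq> c v"
    using bichromatic_cycle_neighbours[OF bc v(1) sym] by blast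
  with v \<open>set vs \<subseteq> V\<close> have "{u, w} \<subseteq> {u \<in> V. adj v u \<and> c u \<noteq> c v \<and> rank v \<le> rank u}"
    by auto
  from card_mono[OF _ this] have "card {u, w} \<le> 1"
    using \<open>finite V\<close> peel v(1) \<open>set vs \<subseteq> V\<close> by fastforce
  with \<open>u \<noteq> w\<close> show False by simp
qed

lemma card_le_same_colour_deg:
  assumes "finite V" "S \<subseteq> V" "\<And>w. w \<in> S \<Longrightarrow> adj v w \<and> c w = c v"
  shows "card S \<le> same_colour_deg V adj c v"
  unfolding same_colour_deg_def using assms by (intro card_mono) auto

locale acyclic_S3S3 =
  fixes V :: "'a set" and adj :: "'a \<Rightarrow> 'a \<Rightarrow> bool" and c :: "'a \<Rightarrow> nat"
  assumes acyclic: "acyclic_S3S3_colouring V adj c"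
begin

lemma two_colours:
  assumes "u \<in> V" "v \<in> V" "w \<in> V" "c u \<noteq> c v" "c w \<noteq> c v"
  shows "c u = c w"
proof -
  have "c x = 1 \<or> c x = 2" if "x \<in> V" for x
    using acyclic that by (simp add: acyclic_S3S3_colouring_def colour_map_def)
  with assms show ?thesis by metis
qed

lemma no_alternating_square:
  assumes "is_cycle V adj [p, q, r, s]" "c q = c s" "c p \<noteq> c q"
  shows "c r = c q"
proof (rule ccontr)
  assume "c r \<noteq> c q"
  with assms have "bichromatic_cycle V adj c [p, q, r, s]"
    using two_colours[of p q r] by (auto simp: bichromatic_cycle_iff_successively is_cycle_def)
  with acyclic show False by (simp add: acyclic_S3S3_colouring_def)
qed

lemma no_alternating_hexagon:
  assumes "is_cycle V adj [p, q, r, s, t, u]" "c q = c s" "c s = c u" "c p = c r" "c p \<noteq> c q"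
  shows "c t = c q"
proof (rule ccontr)
  assume "c t \<noteq> c q"
  with assms have "bichromatic_cycle V adj c [p, q, r, s, t, u]"
    using two_colours[of p q t] by (auto simp: bichromatic_cycle_iff_successively is_cycle_def)
  with acyclic show False by (simp add: acyclic_S3S3_colouring_def)
qed

lemma clique_majority:
  assumes "distinct [p, q, r, s]" "{p, q, r, s} \<subseteq> V"
    and "\<forall>x\<in>{p, q, r, s}. \<forall>y\<in>{p, q, r, s}. x \<noteq> y \<longrightarrow> adj x y"
    and "c q = c r" "c p \<noteq> c q"
  shows "c s = c q"
proof (rule ccontr)
  assume "c s \<noteq> c q"
  then have "c s = c p" using two_colours \<open>c p \<noteq> c q\<close> assms(2) by auto
  moreover have "is_cycle V adj [q, p, r, s]"
    using assms(1-3) by (auto simp: is_cycle_iff_successively)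
  ultimately have "c r = c p" using no_alternating_square \<open>c p \<noteq> c q\<close> by metis
  with assms(4,5) show False by simp
qed

lemma fourth_neighbour_other_colour:
  assumes "finite V" "v \<in> V" "distinct [w1, w2, w3, w4]" "{w1, w2, w3, w4} \<subseteq> V"
    "adj v w1" "adj v w2" "adj v w3" "adj v w4" "c w1 = c v" "c w2 = c v" "c w3 = c v"
  shows "c w4 \<noteq> c v"
proof
  assume "c w4 = c v"
  with assms have "card {w1, w2, w3, w4} \<le> same_colour_deg V adj c v"
    by (intro card_le_same_colour_deg) auto
  moreover have "same_colour_deg V adj c v \<le> 3"
    using acyclic \<open>v \<in> V\<close> by (simp add: acyclic_S3S3_colouring_def)
  ultimately show False using assms(3) by simp
qed

end

lemma F_adj_sym: "F_adj u v \<Longrightarrow> F_adj v u"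
  by (auto simp: F_adj_def)

lemma mem_F_V [simp]: "v \<in> F_V"
  by (cases v) (auto simp: F_V_def)

lemma finite_F_V: "finite F_V"
  by (simp add: F_V_def)

lemma card_F_V_filter:
  "card {w \<in> F_V. P w} = length (filter P [Va, Vb, Vc, Vd, Ve, Vg, Vh, Vi, Vx, Vx'])"
  by (subst distinct_length_filter) (auto simp: F_V_def intro: arg_cong[where f = card])

lemmas F_adj_simps = F_adj_def F_edges_def

definition F_witness :: "vtx \<Rightarrow> nat" where
  "F_witness v = (if v \<in> {Va, Vb, Vc, Vd} then 1 else 2)"

lemma F_witness_acyclic: "acyclic_S3S3_colouring F_V F_adj F_witness"
proof -
  have "\<forall>v\<in>F_V. same_colour_deg F_V F_adj F_witness v \<le> 3"
    unfolding same_colour_deg_def card_F_V_filter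
    by (simp add: F_V_def F_adj_simps F_witness_def)
  moreover have "\<not> bichromatic_cycle F_V F_adj F_witness vs" for vs
  proof (rule no_bichromatic_cycle_by_peeling)
    \<comment> \<open>the deletion order of the forest argument\<close>
    let ?rank = "\<lambda>v. case v of Vx' \<Rightarrow> 0 | Vh \<Rightarrow> 1 | Vi \<Rightarrow> 2 | Vb \<Rightarrow> 3 | Vg \<Rightarrow> 4
      | Va \<Rightarrow> 5 | Vd \<Rightarrow> 6 | Vc \<Rightarrow> 7 | Ve \<Rightarrow> 8 | Vx \<Rightarrow> (9::nat)"
    show "\<forall>v\<in>F_V. card {u \<in> F_V. F_adj v u \<and> F_witness u \<noteq> F_witness v \<and> ?rank v \<le> ?rank u} \<le> 1"
      unfolding card_F_V_filter by (simp add: F_V_def F_adj_simps F_witness_def)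
  qed (simp_all add: F_V_def F_adj_sym)
  ultimately show ?thesis
    by (auto simp: acyclic_S3S3_colouring_def colour_map_def F_witness_def)
qed

context
  fixes f :: "vtx \<Rightarrow> nat"
  assumes F_acyclic: "acyclic_S3S3_colouring F_V F_adj f"
begin

interpretation acyclic_S3S3 F_V F_adj f
  by (rule acyclic_S3S3.intro) (rule F_acyclic)

lemmas F_two_colours = two_colours[OF mem_F_V mem_F_V mem_F_V]

lemmas F_fourth_neighbour_other_colour = fourth_neighbour_other_colour[OF finite_F_V mem_F_V]

lemma a_c_d_same_colour: "f Vc = f Va \<and> f Vd = f Va"
proof -
  consider "f Vc = f Va" "f Vd = f Va" | (a_odd) "f Vd = f Vc" "f Va \<noteq> f Vc"
    | (c_odd) "f Vd = f Va" "f Vc \<noteq> f Va" | (d_odd) "f Vc = f Va" "f Vd \<noteq> f Va"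
    using F_two_colours by metis
  then show ?thesis
  proof cases
    case a_odd
    have e: "f Ve = f Vc" and b: "f Vb = f Vc"
      by (rule clique_majority[of Va Vc Vd]; simp add: F_adj_simps a_odd)+
    have "f Vg \<noteq> f Vc"
      by (rule F_fourth_neighbour_other_colour[of Vb Vd Ve]) (simp_all add: F_adj_simps a_odd e b)
    then have "f Vg = f Va" using F_two_colours a_odd by metis
    have "f Ve = f Va"
      by (rule no_alternating_square[of Vb _ _ Vg])
        (simp_all add: is_cycle_iff_successively F_adj_simps a_odd not_sym[OF a_odd(2)] b \<open>f Vg = f Va\<close>)
    with a_odd e show ?thesis by simp
  next
    case c_odd
    have e: "f Ve = f Va" and b: "f Vb = f Va"
      by (rule clique_majority[of Vc Va Vd]; simp add: F_adj_simps c_odd)+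
    have "f Vg = f Vb" "f Vx' = f Vb"
      by (rule no_alternating_square[of Vc _ _ Ve]; simp add: is_cycle_iff_successively F_adj_simps c_odd e b)+
    then have "f Vx' \<noteq> f Vb"
      by (intro F_fourth_neighbour_other_colour[of Va Vd Vg]) (simp_all add: F_adj_simps c_odd b)
    with \<open>f Vx' = f Vb\<close> show ?thesis by simp
  next
    case d_odd
    have e: "f Ve = f Va" and b: "f Vb = f Va"
      by (rule clique_majority[of Vd Va Vc]; simp add: F_adj_simps d_odd)+
    have "f Vg \<noteq> f Vc"
      by (rule F_fourth_neighbour_other_colour[of Va Vb Ve]) (simp_all add: F_adj_simps d_odd e b)
    then have "f Vg = f Vd" using F_two_colours d_odd by metis
    have "f Ve = f Vd"
      by (rule no_alternating_square[of Vb _ _ Vg])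
        (simp_all add: is_cycle_iff_successively F_adj_simps d_odd not_sym[OF d_odd(2)] b \<open>f Vg = f Vd\<close>)
    with d_odd e show ?thesis by simp
  qed simp
qed

lemma exactly_one_of_b_e_coloured_like_a: "f Vb = f Va \<longleftrightarrow> f Ve \<noteq> f Va"
proof
  show "f Ve \<noteq> f Va" if "f Vb = f Va"
    by (rule F_fourth_neighbour_other_colour[of Vb Vc Vd])
      (simp_all add: F_adj_simps that a_c_d_same_colour)
  show "f Vb = f Va" if "f Ve \<noteq> f Va"
  proof (rule ccontr)
    assume "f Vb \<noteq> f Va"
    then have "f Ve = f Vb" using F_two_colours \<open>f Ve \<noteq> f Va\<close> by metis
    have "f Vc = f Vb"
      by (rule no_alternating_square[of Vd _ _ Ve])
        (simp_all add: is_cycle_iff_successively F_adj_simps a_c_d_same_colour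
          \<open>f Ve = f Vb\<close> not_sym[OF \<open>f Vb \<noteq> f Va\<close>])
    with \<open>f Vb \<noteq> f Va\<close> show False by (simp add: a_c_d_same_colour)
  qed
qed

lemma h_i_x_x'_coloured_unlike_a:
  "f Vh \<noteq> f Va \<and> f Vi \<noteq> f Va \<and> f Vx' \<noteq> f Va \<and> f Vx \<noteq> f Va"
proof -
  note acd = a_c_d_same_colour[THEN conjunct1] a_c_d_same_colour[THEN conjunct2]
  consider (b) "f Vb = f Va" "f Ve \<noteq> f Va" | (e) "f Ve = f Va" "f Vb \<noteq> f Va"
    using exactly_one_of_b_e_coloured_like_a by blast
  then show ?thesis
  proof cases
    case b
    have h: "f Vh \<noteq> f Va"
      by (rule F_fourth_neighbour_other_colour[of Vb Vc Vd]) (simp_all add: F_adj_simps b acd)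
    have "f Vi \<noteq> f Vd"
      by (rule F_fourth_neighbour_other_colour[of Va Vb Vc]) (simp_all add: F_adj_simps b acd)
    then have i: "f Vi \<noteq> f Va" by (simp add: acd)
    have "f Vx' \<noteq> f Vb"
      by (rule F_fourth_neighbour_other_colour[of Va Vc Vd]) (simp_all add: F_adj_simps b acd)
    then have x': "f Vx' \<noteq> f Va" by (simp add: b)
    have he: "f Vh = f Ve" and ie: "f Vi = f Ve" using F_two_colours h i b by metis+
    have "f Vx = f Ve"
      by (rule no_alternating_hexagon[of Vd Ve Va Vh Vx Vi])
        (simp_all add: is_cycle_iff_successively F_adj_simps acd he ie not_sym[OF b(2)])
    with h i x' b show ?thesis by simp
  next
    case e
    have h: "f Vh \<noteq> f Va"
      by (rule F_fourth_neighbour_other_colour[of Vc Vd Ve]) (simp_all add: F_adj_simps e acd)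
    have "f Vi \<noteq> f Vd"
      by (rule F_fourth_neighbour_other_colour[of Va Vc Ve]) (simp_all add: F_adj_simps e acd)
    then have i: "f Vi \<noteq> f Va" by (simp add: acd)
    have "f Vx' \<noteq> f Ve"
      by (rule F_fourth_neighbour_other_colour[of Va Vc Vd]) (simp_all add: F_adj_simps e acd)
    then have x': "f Vx' \<noteq> f Va" by (simp add: e)
    have hb: "f Vh = f Vb" and ib: "f Vi = f Vb" using F_two_colours h i e by metis+
    have "f Vx = f Vb"
      by (rule no_alternating_hexagon[of Va Vb Vd Vi Vx Vh])
        (simp_all add: is_cycle_iff_successively F_adj_simps acd hb ib not_sym[OF e(2)])
    with h i x' e show ?thesis by simp
  qed
qed

lemma x_same_colour_as_x': "f Vx = f Vx'"
  using h_i_x_x'_coloured_unlike_a F_two_colours by metis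

lemma same_colour_deg_x: "same_colour_deg F_V F_adj f Vx = 2"
proof -
  have "f Vh = f Vx" "f Vi = f Vx" using h_i_x_x'_coloured_unlike_a F_two_colours by metis+
  then show ?thesis unfolding same_colour_deg_def card_F_V_filter by (simp add: F_adj_simps)
qed

lemma same_colour_deg_x': "same_colour_deg F_V F_adj f Vx' = 1"
proof -
  have "(f Vb = f Vx') \<noteq> (f Ve = f Vx')"
    using exactly_one_of_b_e_coloured_like_a h_i_x_x'_coloured_unlike_a F_two_colours by metis
  then show ?thesis
    unfolding same_colour_deg_def card_F_V_filter by (cases "f Vb = f Vx'") (simp_all add: F_adj_simps)
qed

end

theorem mainTheorem7:
  shows "(\<exists>f. acyclic_S3S3_colouring F_V F_adj f) \<and>
    (\<forall>f. acyclic_S3S3_colouring F_V F_adj f \<longrightarrow>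
       f Vx = f Vx' \<and> same_colour_deg F_V F_adj f Vx = 2 \<and>
       same_colour_deg F_V F_adj f Vx' = 1)"
  using F_witness_acyclic x_same_colour_as_x' same_colour_deg_x same_colour_deg_x' by blast

end
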